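(* Let $X=(X_1,\dots,X_p)\in\mathbb{R}^p$ satisfy $X\sim\mathcal{N}(0,\Sigma)$ with $\Sigma$ positive definite, and let $Y$ be a real random variable with $\mathbb{E}Y^2<\infty$, jointly distributed with $X$. Let $\beta^*=\arg\min_{w\in\mathbb{R}^p}\mathbb{E}[Y-X^\top w]^2=\Sigma^{-1}\mathbb{E}(XY)$, and for $j\in[p]$ let $\beta^{(j)}=\arg\min_{w\in\mathbb{R}^{p-1}}\mathbb{E}[Y-X_{-j}^\top w]^2$, where $X_{-j}\in\mathbb{R}^{p-1}$ is $X$ with its $j$-th coordinate removed and $\beta^*_{-j}\in\mathbb{R}^{p-1}$ is $\beta^*$ with its $j$-th entry removed. Define the population dropout and retraining variable importance estimates (with negative mean squared error as predictive skill, restricted to linear predictors) $$\widehat{\mathrm{VI}}^{(\mathrm{DR})}_j=\mathbb{E}[Y-X_{-j}^\top\beta^*_{-j}]^2-\mathbb{E}[Y-X^\top\beta^*]^2,\qquad \widehat{\mathrm{VI}}^{(\mathrm{RT})}_j=\mathbb{E}[Y-X_{-j}^\top\beta^{(j)}]^2-\mathbb{E}[Y-X^\top\beta^*]^2 .$$ Then $$\widehat{\mathrm{VI}}^{(\mathrm{DR})}_j-\widehat{\mathrm{VI}}^{(\mathrm{RT})}_j=\frac{\gamma_j^\top\Sigma_{(j)}^{-1}\gamma_j}{(\Sigma_{jj}-\gamma_j^\top\Sigma_{(j)}^{-1}\gamma_j)^2}\Big[\mathbb{E}(X_jY)-\gamma_j^\top\Sigma_{(j)}^{-1}\mathbb{E}(X_{-j}Y)\Big]^2,$$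 where $\gamma_j=\mathbb{E}(X_jX_{-j})\in\mathbb{R}^{p-1}$ and $\Sigma_{(j)}=\mathbb{E}(X_{-j}X_{-j}^\top)\in\mathbb{R}^{(p-1)\times(p-1)}$ is $\Sigma$ with its $j$-th row and column removed.
   Context: The dropout method predicts $Y$ from $X_{-j}$ by plugging the full linear model with $X_j$ replaced by its mean $0$, i.e. uses $X_{-j}^\top\beta^*_{-j}$; the retraining method refits a linear model on $X_{-j}$, i.e. uses $X_{-j}^\top\beta^{(j)}$. *)

theory Defs
  imports "HOL-Probability.Probability" "Jordan_Normal_Form.Determinant"
    "Jordan_Normal_Form.Gauss_Jordan_Elimination"
begin

text \<open>Vectors in R^p are represented by functions on the index set {..<p}
  (random vector X: \<open>X \<omega> i\<close>, i < p).\<close>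

definition pos_def_mat :: "nat \<Rightarrow> real mat \<Rightarrow> bool" where
  "pos_def_mat p S \<longleftrightarrow> S \<in> carrier_mat p p \<and> S\<^sup>T = S \<and>
     (\<forall>v \<in> carrier_vec p. v \<noteq> 0\<^sub>v p \<longrightarrow> v \<bullet> (S *\<^sub>v v) > 0)"

text \<open>X ~ N(0, S): every linear combination w^T X is centered normal with
  variance w^T S w (degenerate, i.e. a.s. 0, when that variance is 0).\<close>
definition centered_gaussian_vector ::
  "'a measure \<Rightarrow> nat \<Rightarrow> ('a \<Rightarrow> nat \<Rightarrow> real) \<Rightarrow> real mat \<Rightarrow> bool" where
  "centered_gaussian_vector M p X S \<longleftrightarrow>
     (\<forall>i<p. (\<lambda>\<omega>. X \<omega> i) \<in> borel_measurable M) \<and>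
     (\<forall>w :: nat \<Rightarrow> real.
        let s = (\<Sum>i<p. \<Sum>k<p. w i * w k * S $$ (i, k)) in
        if s > 0 then distributed M lborel (\<lambda>\<omega>. \<Sum>i<p. w i * X \<omega> i) (normal_density 0 (sqrt s))
        else (AE \<omega> in M. (\<Sum>i<p. w i * X \<omega> i) = 0))"

definition lin_mse :: "'a measure \<Rightarrow> ('a \<Rightarrow> nat \<Rightarrow> real) \<Rightarrow> ('a \<Rightarrow> real) \<Rightarrow> nat set \<Rightarrow> (nat \<Rightarrow> real) \<Rightarrow> real" where
  "lin_mse M X Y I w = integral\<^sup>L M (\<lambda>\<omega>. (Y \<omega> - (\<Sum>i\<in>I. X \<omega> i * w i))\<^sup>2)"

text \<open>Index of the k-th remaining coordinate after removing coordinate j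
  (same convention as mat_delete).\<close>
definition skip_idx :: "nat \<Rightarrow> nat \<Rightarrow> nat" where
  "skip_idx j k = (if k < j then k else Suc k)"

definition inv_mat :: "real mat \<Rightarrow> real mat" where
  "inv_mat A = the (mat_inverse A)"

end

theory Submission
  imports Defs
begin

text \<open>
  Both mean squared errors are quadratic in the weights, with Hessian \<open>\<Sigma>\<close> and its principal
  submatrix \<open>A\<close> (row and column \<open>j\<close> deleted) respectively, so the minimisers are characterised
  by the normal equations. Write \<open>g = \<gamma>\<^sub>j\<close>, \<open>c = E(X_{-j} Y)\<close>, \<open>b = E(X_j Y)\<close>, \<open>s = \<beta>*_j\<close>,
  \<open>u = \<beta>*_{-j}\<close> and \<open>v = \<beta>^(j)\<close>. The normal equations read \<open>A v = c\<close> for the retrained fit and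
  \<open>A u = c - s g\<close>, \<open>g \<bullet> u + \<Sigma>_jj s = b\<close> for the full one. Hence \<open>u = v - s A^-1 g\<close>, so the
  excess risk of \<open>u\<close> over \<open>v\<close> in the reduced model, which is the difference of the two
  importance measures, equals \<open>s\<^sup>2 q\<close> with \<open>q = g \<bullet> A^-1 g\<close>; and eliminating \<open>u\<close> from the last
  equation gives \<open>s (\<Sigma>_jj - q) = b - g \<bullet> A^-1 c\<close>. The Schur complement \<open>\<Sigma>_jj - q\<close> is positive
  since \<open>\<Sigma>\<close> is positive definite.
\<close>

no_notation inner (infix \<open>\<bullet>\<close> 70)
no_notation vec_nth (infixl \<open>$\<close> 90)

lemma skip_idx_less: "j < p \<Longrightarrow> k < p - 1 \<Longrightarrow> skip_idx j k < p"
  by (auto simp: skip_idx_def)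

lemma inj_skip_idx: "inj (skip_idx j)"
  by (auto simp: inj_on_def skip_idx_def split: if_splits)

lemma skip_idx_image: "j < p \<Longrightarrow> skip_idx j ` {..<p - 1} = {..<p} - {j}"
proof (intro equalityI subsetI)
  fix x assume "j < p" "x \<in> skip_idx j ` {..<p - 1}"
  then show "x \<in> {..<p} - {j}" by (auto simp: skip_idx_def)
next
  fix x assume j: "j < p" and x: "x \<in> {..<p} - {j}"
  show "x \<in> skip_idx j ` {..<p - 1}"
  proof (cases "x < j")
    case True then show ?thesis using j by (intro image_eqI[of _ _ x]) (auto simp: skip_idx_def)
  next
    case False then show ?thesis using j x by (intro image_eqI[of _ _ "x - 1"]) (auto simp: skip_idx_def)
  qed
qed

lemma bij_betw_skip_idx: "j < p \<Longrightarrow> bij_betw (skip_idx j) {..<p - 1} ({..<p} - {j})"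
  by (rule bij_betw_imageI[OF inj_on_subset[OF inj_skip_idx] skip_idx_image]) auto

lemma sum_Diff_skip_idx: "j < p \<Longrightarrow> (\<Sum>i\<in>{..<p} - {j}. f i) = (\<Sum>k<p - 1. f (skip_idx j k))"
  by (rule sum.reindex_bij_betw[symmetric]) (rule bij_betw_skip_idx)

lemma mat_delete_index_skip_idx:
  "S \<in> carrier_mat p p \<Longrightarrow> k < p - 1 \<Longrightarrow> l < p - 1 \<Longrightarrow>
    mat_delete S j j $$ (k, l) = S $$ (skip_idx j k, skip_idx j l)"
  by (simp add: mat_delete_def skip_idx_def)

lemma symmetric_mat_index:
  "S \<in> carrier_mat p p \<Longrightarrow> S\<^sup>T = S \<Longrightarrow> i < p \<Longrightarrow> k < p \<Longrightarrow> S $$ (i, k) = S $$ (k, i)"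
  by (metis carrier_matD index_transpose_mat(1))

definition drop_coord :: "nat \<Rightarrow> nat \<Rightarrow> (nat \<Rightarrow> 'a) \<Rightarrow> 'a vec" where
  "drop_coord p j w = vec (p - 1) (\<lambda>k. w (skip_idx j k))"

definition insert_coord :: "nat \<Rightarrow> 'a \<Rightarrow> 'a vec \<Rightarrow> nat \<Rightarrow> 'a" where
  "insert_coord j t x i = (if i = j then t else x $ (if i < j then i else i - 1))"

lemma insert_coord_same [simp]: "insert_coord j t x j = t"
  by (simp add: insert_coord_def)

lemma insert_coord_skip_idx [simp]: "insert_coord j t x (skip_idx j k) = x $ k"
  by (auto simp: insert_coord_def skip_idx_def)

lemma drop_insert_coord [simp]: "x \<in> carrier_vec (p - 1) \<Longrightarrow> drop_coord p j (insert_coord j t x) = x"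
  by (auto simp: drop_coord_def insert_coord_def skip_idx_def)

lemma scalar_prod_vec: "vec n f \<bullet> vec n g = (\<Sum>k<n. f k * g k)"
  by (simp add: scalar_prod_def lessThan_atLeast0)

lemma scalar_prod_drop_coord:
  "j < p \<Longrightarrow> drop_coord p j v \<bullet> drop_coord p j w = (\<Sum>i\<in>{..<p} - {j}. v i * w i)"
  by (simp add: drop_coord_def scalar_prod_vec sum_Diff_skip_idx)

lemma quadratic_form_vec:
  fixes S :: "'a :: comm_ring mat"
  assumes "S \<in> carrier_mat p p"
  shows "vec p w \<bullet> (S *\<^sub>v vec p w) = (\<Sum>i<p. \<Sum>k<p. w i * w k * S $$ (i, k))"
  using assms
  by (simp add: scalar_prod_def mult_mat_vec_def row_def lessThan_atLeast0 sum_distrib_left algebra_simps)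

lemma quadratic_form_mat_delete:
  fixes S :: "'a :: comm_ring mat"
  assumes "S \<in> carrier_mat p p" and "j < p"
  shows "drop_coord p j w \<bullet> (mat_delete S j j *\<^sub>v drop_coord p j w)
    = (\<Sum>i\<in>{..<p} - {j}. \<Sum>k\<in>{..<p} - {j}. w i * w k * S $$ (i, k))"
  unfolding drop_coord_def quadratic_form_vec[OF mat_delete_carrier[OF assms(1)]]
  using assms by (simp add: sum_Diff_skip_idx mat_delete_index_skip_idx)

lemma quadratic_form_split:
  fixes S :: "real mat"
  assumes S: "S \<in> carrier_mat p p" and sym: "S\<^sup>T = S" and j: "j < p"
  shows "(\<Sum>i<p. \<Sum>k<p. w i * w k * S $$ (i, k))
    = (w j)\<^sup>2 * S $$ (j, j) + 2 * w j * (drop_coord p j (\<lambda>k. S $$ (j, k)) \<bullet> drop_coord p j w)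
      + drop_coord p j w \<bullet> (mat_delete S j j *\<^sub>v drop_coord p j w)"
proof -
  let ?I = "{..<p} - {j}"
  have remove_j: "\<And>f. (\<Sum>i<p. f i) = f j + (\<Sum>i\<in>?I. f i)"
    using j by (simp add: sum.remove)
  have "(\<Sum>i\<in>?I. w i * w j * S $$ (i, j)) = (\<Sum>k\<in>?I. w j * w k * S $$ (j, k))"
    using symmetric_mat_index[OF S sym] j by (intro sum.cong) auto
  then have "(\<Sum>i<p. \<Sum>k<p. w i * w k * S $$ (i, k))
      = (w j)\<^sup>2 * S $$ (j, j) + 2 * w j * (\<Sum>k\<in>?I. S $$ (j, k) * w k)
        + (\<Sum>i\<in>?I. \<Sum>k\<in>?I. w i * w k * S $$ (i, k))"
    by (simp add: remove_j sum.distrib sum_distrib_left power2_eq_square algebra_simps)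
  then show ?thesis
    using S j by (simp add: scalar_prod_drop_coord quadratic_form_mat_delete)
qed

lemma pos_def_mat_quadratic_form_pos:
  assumes "pos_def_mat p S" and "i < p" and "w i \<noteq> 0"
  shows "0 < (\<Sum>i<p. \<Sum>k<p. w i * w k * S $$ (i, k))"
proof -
  have "vec p w \<noteq> 0\<^sub>v p"
    using assms(2,3) by (metis index_vec index_zero_vec(1))
  then show ?thesis
    using assms(1) quadratic_form_vec[of S p w] unfolding pos_def_mat_def by auto
qed

lemma pos_def_mat_quadratic_form_nonneg:
  assumes "pos_def_mat p S"
  shows "0 \<le> (\<Sum>i<p. \<Sum>k<p. w i * w k * S $$ (i, k))"
proof (cases "\<exists>i<p. w i \<noteq> 0")
  case True
  then show ?thesis using pos_def_mat_quadratic_form_pos[OF assms] less_imp_le by blast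
qed simp

lemma pos_def_mat_delete:
  assumes pd: "pos_def_mat p S" and j: "j < p"
  shows "pos_def_mat (p - 1) (mat_delete S j j)"
  unfolding pos_def_mat_def
proof (intro conjI ballI impI)
  have S: "S \<in> carrier_mat p p" and sym: "S\<^sup>T = S"
    using pd unfolding pos_def_mat_def by auto
  show A: "mat_delete S j j \<in> carrier_mat (p - 1) (p - 1)"
    using mat_delete_carrier[OF S] .
  show "(mat_delete S j j)\<^sup>T = mat_delete S j j"
    using A S skip_idx_less[OF j] symmetric_mat_index[OF S sym]
    by (intro eq_matI) (auto simp: mat_delete_index_skip_idx)
  fix x :: "real vec"
  assume x: "x \<in> carrier_vec (p - 1)" and "x \<noteq> 0\<^sub>v (p - 1)"
  then obtain k where k: "k < p - 1" "x $ k \<noteq> 0"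
    by (metis eq_vecI index_zero_vec carrier_vecD)
  have "0 < (\<Sum>i<p. \<Sum>l<p. insert_coord j 0 x i * insert_coord j 0 x l * S $$ (i, l))"
    using pos_def_mat_quadratic_form_pos[OF pd skip_idx_less[OF j k(1)]] k(2) by simp
  then show "0 < x \<bullet> (mat_delete S j j *\<^sub>v x)"
    using quadratic_form_split[OF S sym j] x by simp
qed

lemma pos_def_mat_inverse:
  assumes pd: "pos_def_mat n A"
  shows "A * inv_mat A = 1\<^sub>m n" and "inv_mat A * A = 1\<^sub>m n" and "inv_mat A \<in> carrier_mat n n"
proof -
  have A: "A \<in> carrier_mat n n"
    using pd unfolding pos_def_mat_def by simp
  have "det A \<noteq> 0"
  proof
    assume "det A = 0"
    then obtain v where "v \<in> carrier_vec n" "v \<noteq> 0\<^sub>v n" "A *\<^sub>v v = 0\<^sub>v n"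
      using det_0_iff_vec_prod_zero_field[OF A] by blast
    then show False
      using pd unfolding pos_def_mat_def by fastforce
  qed
  then have "A \<in> Units (ring_mat TYPE(real) n ())"
    by (rule det_non_zero_imp_unit[OF A])
  then obtain B where "mat_inverse A = Some B"
    using mat_inverse(1)[OF A] by fastforce
  then show "A * inv_mat A = 1\<^sub>m n" "inv_mat A * A = 1\<^sub>m n" "inv_mat A \<in> carrier_mat n n"
    using mat_inverse(2)[OF A] unfolding inv_mat_def by auto
qed

lemma pos_def_mat_schur_complement_pos:
  assumes pd: "pos_def_mat p S" and j: "j < p"
  defines "g \<equiv> drop_coord p j (\<lambda>k. S $$ (j, k))"
  shows "0 < S $$ (j, j) - g \<bullet> (inv_mat (mat_delete S j j) *\<^sub>v g)"
proof -
  let ?n = "p - 1" and ?A = "mat_delete S j j"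
  have S: "S \<in> carrier_mat p p" and sym: "S\<^sup>T = S"
    using pd unfolding pos_def_mat_def by auto
  have A: "?A \<in> carrier_mat ?n ?n"
    using mat_delete_carrier[OF S] .
  note Ainv = pos_def_mat_inverse[OF pos_def_mat_delete[OF pd j]]
  define z where "z = inv_mat ?A *\<^sub>v g"
  have g: "g \<in> carrier_vec ?n" and z: "z \<in> carrier_vec ?n"
    using Ainv(3) by (simp_all add: g_def z_def drop_coord_def)
  have Az: "?A *\<^sub>v z = g"
    unfolding z_def using A Ainv g by (metis assoc_mult_mat_vec one_mult_mat_vec)
  have "0 < (\<Sum>i<p. \<Sum>k<p.
      insert_coord j 1 ((-1) \<cdot>\<^sub>v z) i * insert_coord j 1 ((-1) \<cdot>\<^sub>v z) k * S $$ (i, k))"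
    using pos_def_mat_quadratic_form_pos[OF pd j] by simp
  also have "\<dots> = S $$ (j, j) - g \<bullet> z"
    using quadratic_form_split[OF S sym j] z g A Az comm_scalar_prod[OF z g]
    by (simp add: g_def[symmetric] mult_mat_vec[of _ ?n ?n] scalar_prod_smult_distrib[of _ ?n]
        smult_scalar_prod_distrib[of _ ?n])
  finally show ?thesis
    unfolding z_def .
qed

lemma quadratic_nonneg_imp_linear_coeff_zero:
  fixes a b :: real
  assumes "\<And>h. 0 \<le> a * h\<^sup>2 + 2 * b * h"
  shows "b = 0"
proof (rule ccontr)
  assume "b \<noteq> 0"
  define D where "D = \<bar>a\<bar> + 1"
  have D: "0 < D" and aD: "a - 2 * D < 0"
    by (simp_all add: D_def abs_if)
  define h where "h = - b / D"
  have "a * h\<^sup>2 + 2 * b * h = b\<^sup>2 * (a - 2 * D) / D\<^sup>2"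
    unfolding h_def using D by (simp add: field_simps power2_eq_square)
  also have "\<dots> < 0"
    using \<open>b \<noteq> 0\<close> D aD by (intro divide_neg_pos mult_pos_neg) auto
  finally show False
    using assms[of h] by simp
qed

lemma symmetric_mat_scalar_prod:
  fixes A :: "'a :: comm_semiring_0 mat"
  assumes A: "A \<in> carrier_mat n n" and sym: "A\<^sup>T = A" and x: "x \<in> carrier_vec n" and y: "y \<in> carrier_vec n"
  shows "x \<bullet> (A *\<^sub>v y) = y \<bullet> (A *\<^sub>v x)"
proof -
  have "y \<bullet> (A *\<^sub>v x) = (A\<^sup>T *\<^sub>v y) \<bullet> x"
    using transpose_vec_mult_scalar[OF A x y] by simp
  also have "\<dots> = x \<bullet> (A *\<^sub>v y)"
    using A x y by (simp add: sym comm_scalar_prod[of _ n])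
  finally show ?thesis ..
qed

definition lsq_objective :: "real mat \<Rightarrow> real vec \<Rightarrow> real vec \<Rightarrow> real" where
  "lsq_objective A c x = x \<bullet> (A *\<^sub>v x) - 2 * (x \<bullet> c)"

lemma lsq_objective_shift:
  assumes A: "A \<in> carrier_mat n n" and sym: "A\<^sup>T = A"
    and c: "c \<in> carrier_vec n" and x: "x \<in> carrier_vec n" and d: "d \<in> carrier_vec n"
  shows "lsq_objective A c (x + h \<cdot>\<^sub>v d)
    = lsq_objective A c x + h\<^sup>2 * (d \<bullet> (A *\<^sub>v d)) + 2 * h * (d \<bullet> (A *\<^sub>v x - c))"
proof -
  have "x \<bullet> (A *\<^sub>v d) = d \<bullet> (A *\<^sub>v x)"
    by (rule symmetric_mat_scalar_prod[OF A sym x d])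
  then show ?thesis
    unfolding lsq_objective_def using A c x d
    by (simp add: add_scalar_prod_distrib[of _ n] scalar_prod_add_distrib[of _ n]
        scalar_prod_minus_distrib[of _ n] mult_add_distrib_mat_vec[of _ n n] mult_mat_vec[of _ n n]
        power2_eq_square algebra_simps)
qed

lemma lsq_objective_diff_rhs:
  assumes "c \<in> carrier_vec n" and "e \<in> carrier_vec n" and "x \<in> carrier_vec n"
  shows "lsq_objective A (c - e) x = lsq_objective A c x + 2 * (x \<bullet> e)"
  using assms by (simp add: lsq_objective_def scalar_prod_minus_distrib[of _ n] algebra_simps)

lemma lsq_objective_minimizer:
  assumes A: "A \<in> carrier_mat n n" and sym: "A\<^sup>T = A" and c: "c \<in> carrier_vec n" and v: "v \<in> carrier_vec n"
    and min: "\<And>x. x \<in> carrier_vec n \<Longrightarrow> lsq_objective A c v \<le> lsq_objective A c x"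
  shows "A *\<^sub>v v = c"
proof -
  define r where "r = A *\<^sub>v v - c"
  have r: "r \<in> carrier_vec n"
    using A c v by (simp add: r_def)
  have "0 \<le> (r \<bullet> (A *\<^sub>v r)) * h\<^sup>2 + 2 * (r \<bullet> r) * h" for h
    using min[of "v + h \<cdot>\<^sub>v r"] lsq_objective_shift[OF A sym c v r, of h] r v
    by (simp add: r_def[symmetric] algebra_simps)
  then have "r \<bullet> r = 0"
    by (rule quadratic_nonneg_imp_linear_coeff_zero)
  then have r0: "r = 0\<^sub>v n"
    using conjugate_square_eq_0_vec[OF r] by simp
  show ?thesis
  proof (rule eq_vecI)
    fix i assume "i < dim_vec c"
    then show "(A *\<^sub>v v) $ i = c $ i"
      using r0 A c unfolding r_def by (metis (no_types) carrier_matD(1) carrier_vecD dim_mult_mat_vec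
          eq_iff_diff_eq_0 index_minus_vec(1) index_zero_vec(1))
  qed (use A c in simp)
qed

lemma lsq_block_normal_equations:
  assumes A: "A \<in> carrier_mat n n" and sym: "A\<^sup>T = A"
    and g: "g \<in> carrier_vec n" and c: "c \<in> carrier_vec n" and u: "u \<in> carrier_vec n"
    and min: "\<And>t x. x \<in> carrier_vec n \<Longrightarrow>
      s\<^sup>2 * S - 2 * s * b + 2 * s * (g \<bullet> u) + lsq_objective A c u
        \<le> t\<^sup>2 * S - 2 * t * b + 2 * t * (g \<bullet> x) + lsq_objective A c x"
  shows "A *\<^sub>v u = c - s \<cdot>\<^sub>v g" and "g \<bullet> u + S * s = b"
proof -
  have cg: "c - s \<cdot>\<^sub>v g \<in> carrier_vec n"
    using c g by simp
  show "A *\<^sub>v u = c - s \<cdot>\<^sub>v g"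
  proof (rule lsq_objective_minimizer[OF A sym cg u])
    fix x :: "real vec" assume x: "x \<in> carrier_vec n"
    show "lsq_objective A (c - s \<cdot>\<^sub>v g) u \<le> lsq_objective A (c - s \<cdot>\<^sub>v g) x"
      using min[OF x, of s] lsq_objective_diff_rhs[OF c _ u, of "s \<cdot>\<^sub>v g" A]
        lsq_objective_diff_rhs[OF c _ x, of "s \<cdot>\<^sub>v g" A] g u x
      by (simp add: comm_scalar_prod[of g n])
  qed
  have "0 \<le> S * h\<^sup>2 + 2 * (S * s - b + g \<bullet> u) * h" for h
    using min[OF u, of "s + h"] by (simp add: power2_eq_square algebra_simps)
  then have "S * s - b + g \<bullet> u = 0"
    by (rule quadratic_nonneg_imp_linear_coeff_zero)
  then show "g \<bullet> u + S * s = b"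
    by simp
qed

lemma lsq_block_gap:
  assumes pd: "pos_def_mat n A"
    and g: "g \<in> carrier_vec n" and c: "c \<in> carrier_vec n" and u: "u \<in> carrier_vec n" and v: "v \<in> carrier_vec n"
    and u_eq: "A *\<^sub>v u = c - s \<cdot>\<^sub>v g" and s_eq: "g \<bullet> u + S * s = b" and v_eq: "A *\<^sub>v v = c"
    and schur: "S - g \<bullet> (inv_mat A *\<^sub>v g) \<noteq> 0"
  shows "lsq_objective A c u - lsq_objective A c v
    = g \<bullet> (inv_mat A *\<^sub>v g) / (S - g \<bullet> (inv_mat A *\<^sub>v g))\<^sup>2
      * (b - g \<bullet> (inv_mat A *\<^sub>v c))\<^sup>2"
proof -
  have A: "A \<in> carrier_mat n n" and sym: "A\<^sup>T = A"
    using pd unfolding pos_def_mat_def by auto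
  note Ainv = pos_def_mat_inverse[OF pd]
  define z where "z = inv_mat A *\<^sub>v g"
  define q where "q = g \<bullet> z"
  have z: "z \<in> carrier_vec n"
    using Ainv(3) g by (simp add: z_def)
  have solve: "inv_mat A *\<^sub>v (A *\<^sub>v x) = x" if "x \<in> carrier_vec n" for x
    using that A Ainv by (metis assoc_mult_mat_vec one_mult_mat_vec)
  have Az: "A *\<^sub>v z = g"
    unfolding z_def using A Ainv g by (metis assoc_mult_mat_vec one_mult_mat_vec)
  have v_sol: "v = inv_mat A *\<^sub>v c"
    using solve[OF v] v_eq by simp
  have u_sol: "u = v + (- s) \<cdot>\<^sub>v z"
  proof -
    have "u = inv_mat A *\<^sub>v (c - s \<cdot>\<^sub>v g)"
      using solve[OF u] u_eq by simp
    also have "\<dots> = v + (- s) \<cdot>\<^sub>v z"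
      using Ainv(3) c g v_sol unfolding z_def
      by (auto simp: mult_minus_distrib_mat_vec[of _ n n] mult_mat_vec[of _ n n])
    finally show ?thesis .
  qed
  have "lsq_objective A c u - lsq_objective A c v = s\<^sup>2 * q"
    using lsq_objective_shift[OF A sym c v z, of "- s"] u_sol v_eq Az c z comm_scalar_prod[OF z g]
    by (simp add: q_def)
  moreover have "b - g \<bullet> (inv_mat A *\<^sub>v c) = s * (S - q)"
    using s_eq g v z unfolding u_sol v_sol[symmetric] q_def
    by (simp add: scalar_prod_add_distrib[of _ n] algebra_simps)
  ultimately show ?thesis
    using schur by (simp add: power_mult_distrib q_def z_def)
qed

lemma normal_distributed_second_moment:
  assumes D: "distributed M lborel Z (normal_density 0 \<sigma>)" and \<sigma>: "0 < \<sigma>"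
  shows "integrable M (\<lambda>x. (Z x)\<^sup>2)" and "(\<integral>x. (Z x)\<^sup>2 \<partial>M) = \<sigma>\<^sup>2"
proof -
  show "integrable M (\<lambda>x. (Z x)\<^sup>2)"
    using distributed_integrable[OF D, of "\<lambda>x. x\<^sup>2"] integrable_normal_moment[OF \<sigma>, where \<mu>=0 and k=2] by simp
  have "(\<integral>x. (Z x)\<^sup>2 \<partial>M) = (\<integral>x. normal_density 0 \<sigma> x * (x - 0) ^ (2 * 1) \<partial>lborel)"
    using distributed_integral[OF D, of "\<lambda>x. x\<^sup>2"] by simp
  also have "\<dots> = \<sigma>\<^sup>2"
    using integral_normal_moment_even[OF \<sigma>, of 0 1] by (simp add: power2_eq_square)
  finally show "(\<integral>x. (Z x)\<^sup>2 \<partial>M) = \<sigma>\<^sup>2" .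
qed

lemma centered_gaussian_vector_measurable:
  "centered_gaussian_vector M p X S \<Longrightarrow> i < p \<Longrightarrow> (\<lambda>\<omega>. X \<omega> i) \<in> borel_measurable M"
  unfolding centered_gaussian_vector_def by blast

lemma centered_gaussian_vector_second_moment:
  fixes w :: "nat \<Rightarrow> real"
  assumes G: "centered_gaussian_vector M p X S" and pd: "pos_def_mat p S"
  defines "s \<equiv> \<Sum>i<p. \<Sum>k<p. w i * w k * S $$ (i, k)"
  shows "integrable M (\<lambda>\<omega>. (\<Sum>i<p. w i * X \<omega> i)\<^sup>2)"
    and "(\<integral>\<omega>. (\<Sum>i<p. w i * X \<omega> i)\<^sup>2 \<partial>M) = s"
proof -
  have law: "if 0 < s then distributed M lborel (\<lambda>\<omega>. \<Sum>i<p. w i * X \<omega> i) (normal_density 0 (sqrt s))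
      else (AE \<omega> in M. (\<Sum>i<p. w i * X \<omega> i) = 0)"
    using G unfolding centered_gaussian_vector_def s_def Let_def by blast
  have "integrable M (\<lambda>\<omega>. (\<Sum>i<p. w i * X \<omega> i)\<^sup>2) \<and>
      (\<integral>\<omega>. (\<Sum>i<p. w i * X \<omega> i)\<^sup>2 \<partial>M) = s"
  proof (cases "0 < s")
    case True
    then show ?thesis
      using law normal_distributed_second_moment[of M _ "sqrt s"] by simp
  next
    case False
    then have "s = 0"
      using pos_def_mat_quadratic_form_nonneg[OF pd, of w] by (simp add: s_def)
    have meas: "(\<lambda>\<omega>. (\<Sum>i<p. w i * X \<omega> i)\<^sup>2) \<in> borel_measurable M"
      using centered_gaussian_vector_measurable[OF G] by measurable
    have ae: "AE \<omega> in M. (\<Sum>i<p. w i * X \<omega> i)\<^sup>2 = 0"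
      using law False by (auto elim: AE_mp)
    have "integrable M (\<lambda>\<omega>. (\<Sum>i<p. w i * X \<omega> i)\<^sup>2) = integrable M (\<lambda>_. 0::real)"
      by (rule integrable_cong_AE) (use meas ae in auto)
    moreover have "(\<integral>\<omega>. (\<Sum>i<p. w i * X \<omega> i)\<^sup>2 \<partial>M) = (\<integral>_. 0 \<partial>M)"
      by (rule integral_cong_AE) (use meas ae in auto)
    ultimately show ?thesis
      using \<open>s = 0\<close> by simp
  qed
  then show "integrable M (\<lambda>\<omega>. (\<Sum>i<p. w i * X \<omega> i)\<^sup>2)"
    and "(\<integral>\<omega>. (\<Sum>i<p. w i * X \<omega> i)\<^sup>2 \<partial>M) = s"
    by simp_all
qed

lemma centered_gaussian_vector_covariance:
  assumes G: "centered_gaussian_vector M p X S" and pd: "pos_def_mat p S" and i: "i < p" and k: "k < p"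
  shows "integrable M (\<lambda>\<omega>. X \<omega> i * X \<omega> k)" and "(\<integral>\<omega>. X \<omega> i * X \<omega> k \<partial>M) = S $$ (i, k)"
proof -
  have S: "S \<in> carrier_mat p p" and sym: "S\<^sup>T = S"
    using pd unfolding pos_def_mat_def by auto
  define e :: "nat \<Rightarrow> nat \<Rightarrow> real" where "e a l = (if l = a then 1 else 0)" for a l
  have sq: "integrable M (\<lambda>\<omega>. (X \<omega> a + c * X \<omega> b)\<^sup>2) \<and>
      (\<integral>\<omega>. (X \<omega> a + c * X \<omega> b)\<^sup>2 \<partial>M)
        = S $$ (a, a) + c * S $$ (a, b) + c * S $$ (b, a) + c\<^sup>2 * S $$ (b, b)"
    if ab: "a < p" "b < p" for a b c
  proof -
    define w where "w l = e a l + c * e b l" for l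
    have delta: "(\<Sum>l<p. e d l * f l) = f d" if "d < p" for d and f :: "nat \<Rightarrow> real"
      using that by (simp add: e_def if_distrib[of "\<lambda>x. x * _"] cong: if_cong)
    have lin: "(\<Sum>l<p. w l * f l) = f a + c * f b" for f :: "nat \<Rightarrow> real"
    proof -
      have "(\<Sum>l<p. w l * f l) = (\<Sum>l<p. e a l * f l) + c * (\<Sum>l<p. e b l * f l)"
        by (simp add: w_def sum.distrib sum_distrib_left algebra_simps)
      then show ?thesis
        using ab by (simp add: delta)
    qed
    have "(\<Sum>l<p. \<Sum>m<p. w l * w m * S $$ (l, m)) = (\<Sum>l<p. w l * (\<Sum>m<p. w m * S $$ (l, m)))"
      by (simp add: sum_distrib_left algebra_simps)
    also have "\<dots> = S $$ (a, a) + c * S $$ (a, b) + c * S $$ (b, a) + c\<^sup>2 * S $$ (b, b)"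
      by (simp only: lin) (simp add: power2_eq_square algebra_simps)
    moreover have "(\<Sum>l<p. w l * X \<omega> l) = X \<omega> a + c * X \<omega> b" for \<omega>
      by (rule lin)
    ultimately show ?thesis
      using centered_gaussian_vector_second_moment[OF G pd, of w] by simp
  qed
  \<comment> \<open>the coefficients \<open>1\<close> and \<open>0\<close> make each square an instance of \<open>sq\<close>\<close>
  have prod_eq: "(\<lambda>\<omega>. X \<omega> i * X \<omega> k) = (\<lambda>\<omega>.
      ((X \<omega> i + 1 * X \<omega> k)\<^sup>2 - (X \<omega> i + 0 * X \<omega> k)\<^sup>2 - (X \<omega> k + 0 * X \<omega> i)\<^sup>2) / 2)"
    by (simp add: fun_eq_iff power2_eq_square algebra_simps)
  show "integrable M (\<lambda>\<omega>. X \<omega> i * X \<omega> k)" and "(\<integral>\<omega>. X \<omega> i * X \<omega> k \<partial>M) = S $$ (i, k)"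
    unfolding prod_eq using sq[OF i k, of 1] sq[OF i k, of 0] sq[OF k i, of 0] symmetric_mat_index[OF S sym i k]
    by auto
qed

lemma integrable_mult_square_integrable:
  fixes f g :: "'a \<Rightarrow> real"
  assumes "f \<in> borel_measurable M" and "g \<in> borel_measurable M"
    and "integrable M (\<lambda>x. (f x)\<^sup>2)" and "integrable M (\<lambda>x. (g x)\<^sup>2)"
  shows "integrable M (\<lambda>x. f x * g x)"
proof (rule Bochner_Integration.integrable_bound)
  show "integrable M (\<lambda>x. (f x)\<^sup>2 + (g x)\<^sup>2)"
    using assms by simp
  show "(\<lambda>x. f x * g x) \<in> borel_measurable M"
    using assms by simp
  show "AE x in M. norm (f x * g x) \<le> norm ((f x)\<^sup>2 + (g x)\<^sup>2)"
  proof (rule AE_I2)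
    fix x
    have "0 \<le> (\<bar>f x\<bar> - \<bar>g x\<bar>)\<^sup>2"
      by simp
    also have "\<dots> = (f x)\<^sup>2 + (g x)\<^sup>2 - 2 * (\<bar>f x\<bar> * \<bar>g x\<bar>)"
      by (simp add: power2_diff mult.assoc)
    finally have "\<bar>f x\<bar> * \<bar>g x\<bar> \<le> (f x)\<^sup>2 + (g x)\<^sup>2"
      using mult_nonneg_nonneg[OF abs_ge_zero abs_ge_zero, of "f x" "g x"] by linarith
    then show "norm (f x * g x) \<le> norm ((f x)\<^sup>2 + (g x)\<^sup>2)"
      by (simp add: abs_mult)
  qed
qed

lemma lin_mse_expand:
  assumes G: "centered_gaussian_vector M p X S" and pd: "pos_def_mat p S"
    and Y: "Y \<in> borel_measurable M" and Y2: "integrable M (\<lambda>\<omega>. (Y \<omega>)\<^sup>2)" and I: "I \<subseteq> {..<p}"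
  shows "lin_mse M X Y I w = (\<integral>\<omega>. (Y \<omega>)\<^sup>2 \<partial>M)
     - 2 * (\<Sum>i\<in>I. w i * (\<integral>\<omega>. X \<omega> i * Y \<omega> \<partial>M))
     + (\<Sum>i\<in>I. \<Sum>k\<in>I. w i * w k * S $$ (i, k))"
proof -
  note cov = centered_gaussian_vector_covariance[OF G pd]
  have XY: "integrable M (\<lambda>\<omega>. X \<omega> i * Y \<omega>)" if "i \<in> I" for i
    using that I cov[of i i] centered_gaussian_vector_measurable[OF G, of i] Y Y2
    by (intro integrable_mult_square_integrable) (auto simp: power2_eq_square)
  have XX: "integrable M (\<lambda>\<omega>. X \<omega> i * X \<omega> k)" "(\<integral>\<omega>. X \<omega> i * X \<omega> k \<partial>M) = S $$ (i, k)"
    if "i \<in> I" "k \<in> I" for i k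
    using that I cov[of i k] by auto
  have "(Y \<omega> - (\<Sum>i\<in>I. X \<omega> i * w i))\<^sup>2 = (Y \<omega>)\<^sup>2 - 2 * (\<Sum>i\<in>I. w i * (X \<omega> i * Y \<omega>))
      + (\<Sum>i\<in>I. \<Sum>k\<in>I. w i * w k * (X \<omega> i * X \<omega> k))" for \<omega>
    by (simp add: power2_diff power2_eq_square sum_product sum_distrib_left sum_distrib_right algebra_simps)
  then have "lin_mse M X Y I w
      = (\<integral>\<omega>. (Y \<omega>)\<^sup>2 \<partial>M) - 2 * (\<integral>\<omega>. (\<Sum>i\<in>I. w i * (X \<omega> i * Y \<omega>)) \<partial>M)
      + (\<integral>\<omega>. (\<Sum>i\<in>I. \<Sum>k\<in>I. w i * w k * (X \<omega> i * X \<omega> k)) \<partial>M)"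
    unfolding lin_mse_def using Y2 XY XX by simp
  then show ?thesis
    using XY XX by (simp add: integral_sum)
qed

lemma lin_mse_block_form:
  assumes G: "centered_gaussian_vector M p X S" and pd: "pos_def_mat p S"
    and Y: "Y \<in> borel_measurable M" and Y2: "integrable M (\<lambda>\<omega>. (Y \<omega>)\<^sup>2)" and j: "j < p"
  defines "A \<equiv> mat_delete S j j" and "g \<equiv> drop_coord p j (\<lambda>k. S $$ (j, k))"
    and "b \<equiv> \<lambda>i. \<integral>\<omega>. X \<omega> i * Y \<omega> \<partial>M" and "EY2 \<equiv> \<integral>\<omega>. (Y \<omega>)\<^sup>2 \<partial>M"
  shows "lin_mse M X Y {..<p} w = EY2 + (w j)\<^sup>2 * S $$ (j, j) - 2 * w j * b j
      + 2 * w j * (g \<bullet> drop_coord p j w) + lsq_objective A (drop_coord p j b) (drop_coord p j w)"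
    and "lin_mse M X Y ({..<p} - {j}) w = EY2 + lsq_objective A (drop_coord p j b) (drop_coord p j w)"
proof -
  have S: "S \<in> carrier_mat p p" and sym: "S\<^sup>T = S"
    using pd unfolding pos_def_mat_def by auto
  have "(\<Sum>i<p. w i * b i) = w j * b j + drop_coord p j w \<bullet> drop_coord p j b"
    using j by (simp add: sum.remove scalar_prod_drop_coord)
  then show "lin_mse M X Y {..<p} w = EY2 + (w j)\<^sup>2 * S $$ (j, j) - 2 * w j * b j
      + 2 * w j * (g \<bullet> drop_coord p j w) + lsq_objective A (drop_coord p j b) (drop_coord p j w)"
    using lin_mse_expand[OF G pd Y Y2, of "{..<p}" w] quadratic_form_split[OF S sym j, of w]
    by (simp add: lsq_objective_def A_def g_def b_def EY2_def)
  show "lin_mse M X Y ({..<p} - {j}) w = EY2 + lsq_objective A (drop_coord p j b) (drop_coord p j w)"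
    using lin_mse_expand[OF G pd Y Y2, of "{..<p} - {j}" w] j
    by (simp add: lsq_objective_def A_def b_def EY2_def scalar_prod_drop_coord quadratic_form_mat_delete[OF S j])
qed

lemma lin_mse_minimizers_normal_equations:
  assumes G: "centered_gaussian_vector M p X S" and pd: "pos_def_mat p S"
    and Y: "Y \<in> borel_measurable M" and Y2: "integrable M (\<lambda>\<omega>. (Y \<omega>)\<^sup>2)" and j: "j < p"
    and full_min: "\<forall>w. lin_mse M X Y {..<p} \<beta>s \<le> lin_mse M X Y {..<p} w"
    and red_min: "\<forall>w. lin_mse M X Y ({..<p} - {j}) \<beta>j \<le> lin_mse M X Y ({..<p} - {j}) w"
  defines "A \<equiv> mat_delete S j j" and "g \<equiv> drop_coord p j (\<lambda>k. S $$ (j, k))"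
    and "b \<equiv> \<lambda>i. \<integral>\<omega>. X \<omega> i * Y \<omega> \<partial>M"
  shows "A *\<^sub>v drop_coord p j \<beta>s = drop_coord p j b - \<beta>s j \<cdot>\<^sub>v g"
    and "g \<bullet> drop_coord p j \<beta>s + S $$ (j, j) * \<beta>s j = b j"
    and "A *\<^sub>v drop_coord p j \<beta>j = drop_coord p j b"
proof -
  let ?n = "p - 1" and ?drop = "drop_coord p j"
  have A: "A \<in> carrier_mat ?n ?n" "A\<^sup>T = A"
    using pos_def_mat_delete[OF pd j] unfolding pos_def_mat_def A_def by auto
  have carriers: "g \<in> carrier_vec ?n" "?drop b \<in> carrier_vec ?n"
    "?drop \<beta>s \<in> carrier_vec ?n" "?drop \<beta>j \<in> carrier_vec ?n"
    by (simp_all add: g_def drop_coord_def)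
  note mse = lin_mse_block_form[OF G pd Y Y2 j, folded A_def g_def b_def]
  have "(\<beta>s j)\<^sup>2 * S $$ (j, j) - 2 * \<beta>s j * b j + 2 * \<beta>s j * (g \<bullet> ?drop \<beta>s)
        + lsq_objective A (?drop b) (?drop \<beta>s)
      \<le> t\<^sup>2 * S $$ (j, j) - 2 * t * b j + 2 * t * (g \<bullet> x) + lsq_objective A (?drop b) x"
    if "x \<in> carrier_vec ?n" for t x
    using spec[OF full_min, of "insert_coord j t x"] mse(1)[of \<beta>s] mse(1)[of "insert_coord j t x"] that
    by (simp add: b_def)
  from lsq_block_normal_equations[OF A carriers(1-3) this]
  show "A *\<^sub>v ?drop \<beta>s = ?drop b - \<beta>s j \<cdot>\<^sub>v g" and "g \<bullet> ?drop \<beta>s + S $$ (j, j) * \<beta>s j = b j"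
    by simp_all
  have "lsq_objective A (?drop b) (?drop \<beta>j) \<le> lsq_objective A (?drop b) x"
    if "x \<in> carrier_vec ?n" for x
    using spec[OF red_min, of "insert_coord j 0 x"] mse(2)[of \<beta>j] mse(2)[of "insert_coord j 0 x"] that
    by simp
  then show "A *\<^sub>v ?drop \<beta>j = ?drop b"
    by (rule lsq_objective_minimizer[OF A carriers(2,4)])
qed

theorem proposition1:
  fixes M :: "'a measure" and p j :: nat and X :: "'a \<Rightarrow> nat \<Rightarrow> real"
    and Y :: "'a \<Rightarrow> real" and \<Sigma> :: "real mat"
    and \<beta>s \<beta>j :: "nat \<Rightarrow> real"
  assumes "prob_space M"
    and "centered_gaussian_vector M p X \<Sigma>"
    and "pos_def_mat p \<Sigma>"
    and "Y \<in> borel_measurable M"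
    and "integrable M (\<lambda>\<omega>. (Y \<omega>)\<^sup>2)"
    and "j < p"
    and "\<forall>w. lin_mse M X Y {..<p} \<beta>s \<le> lin_mse M X Y {..<p} w"
    and "\<forall>w. lin_mse M X Y ({..<p} - {j}) \<beta>j \<le> lin_mse M X Y ({..<p} - {j}) w"
  shows
    "let VI_DR = lin_mse M X Y ({..<p} - {j}) \<beta>s - lin_mse M X Y {..<p} \<beta>s;
         VI_RT = lin_mse M X Y ({..<p} - {j}) \<beta>j - lin_mse M X Y {..<p} \<beta>s;
         \<gamma> = vec (p - 1) (\<lambda>k. integral\<^sup>L M (\<lambda>\<omega>. X \<omega> j * X \<omega> (skip_idx j k)));
         \<Sigma>j = mat_delete \<Sigma> j j;
         EXY = vec (p - 1) (\<lambda>k. integral\<^sup>L M (\<lambda>\<omega>. X \<omega> (skip_idx j k) * Y \<omega>));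
         q = \<gamma> \<bullet> (inv_mat \<Sigma>j *\<^sub>v \<gamma>)
     in VI_DR - VI_RT =
        q / (\<Sigma> $$ (j, j) - q)\<^sup>2 *
        (integral\<^sup>L M (\<lambda>\<omega>. X \<omega> j * Y \<omega>) - \<gamma> \<bullet> (inv_mat \<Sigma>j *\<^sub>v EXY))\<^sup>2"
proof -
  let ?n = "p - 1" and ?drop = "drop_coord p j" and ?A = "mat_delete \<Sigma> j j"
  define g where "g = ?drop (\<lambda>k. \<Sigma> $$ (j, k))"
  define b where "b = (\<lambda>i. \<integral>\<omega>. X \<omega> i * Y \<omega> \<partial>M)"
  note normal = lin_mse_minimizers_normal_equations[OF assms(2-8), folded g_def b_def]
  have carriers: "g \<in> carrier_vec ?n" "?drop b \<in> carrier_vec ?n"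
    "?drop \<beta>s \<in> carrier_vec ?n" "?drop \<beta>j \<in> carrier_vec ?n"
    by (simp_all add: g_def drop_coord_def)
  have gap: "lsq_objective ?A (?drop b) (?drop \<beta>s) - lsq_objective ?A (?drop b) (?drop \<beta>j)
      = g \<bullet> (inv_mat ?A *\<^sub>v g) / (\<Sigma> $$ (j, j) - g \<bullet> (inv_mat ?A *\<^sub>v g))\<^sup>2
        * ((\<integral>\<omega>. X \<omega> j * Y \<omega> \<partial>M) - g \<bullet> (inv_mat ?A *\<^sub>v ?drop b))\<^sup>2"
    using lsq_block_gap[OF pos_def_mat_delete[OF assms(3,6)] carriers normal]
      pos_def_mat_schur_complement_pos[OF assms(3,6)] by (simp add: g_def)
  have "vec ?n (\<lambda>k. \<integral>\<omega>. X \<omega> j * X \<omega> (skip_idx j k) \<partial>M) = g"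
    using centered_gaussian_vector_covariance(2)[OF assms(2,3,6)] skip_idx_less[OF assms(6)]
    by (auto simp: g_def drop_coord_def)
  moreover have "vec ?n (\<lambda>k. \<integral>\<omega>. X \<omega> (skip_idx j k) * Y \<omega> \<partial>M) = ?drop b"
    by (simp add: drop_coord_def b_def)
  ultimately show ?thesis
    using gap lin_mse_block_form(2)[OF assms(2-6), folded b_def, of \<beta>s]
      lin_mse_block_form(2)[OF assms(2-6), folded b_def, of \<beta>j]
    by (simp add: Let_def)
qed

end
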